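(* Let $\psi:\mathcal{Q}\to\mathcal{P}$ be a full upper semilattice morphism with $\mathcal{Q}$ finite and $\uparrow\psi(\mathcal{Q})=\mathcal{P}$. For all $A,B\subseteq\mathcal{Q}$ such that every $b\in B$ satisfies $a\le b$ for some $a\in A$, we have \[ \mathrm{Lan}_\psi\big(\mathbb{k}_{\uparrow A\setminus\uparrow B}\big)\cong\mathbb{k}_{\uparrow\psi(A)\setminus\uparrow\psi(B)}, \] where upsets are taken in $\mathcal{Q}$ and $\mathcal{P}$ respectively. In particular, $\mathrm{Lan}_\psi$ maps spread-decomposable representations to spread-decomposable representations.
   Context: Fix a field $\mathbb{k}$. Upper semilattice, full morphism, upper semilattice morphism as usual (joins of finite nonempty sets exist/are preserved; $\psi(q)\le\psi(q')\Rightarrow q\le q'$). $\uparrow X=\{p:\exists x\in X,x\le p\}$. For convex $S$ (i.e. $s\le p\le s'$ with $s,s'\in S$ implies $p\in S$), $\mathbb{k}_S$ is the indicator representation. $\mathrm{Lan}_\psi:\operatorname{rep}\mathcal{Q}\to\operatorname{rep}\mathcal{P}$ is the left adjoint of restriction $M\mapsto M\circ\psi$, and equals precomposition with $\lfloor-\rfloor_\psi$, where $\lfloor p\rfloor_\psi=\bigvee\{q:\psi(q)\le p\}$. A spread is a nonempty convex, zigzag-connected subset; a representation is spread-decomposable if it is isomorphic to a finite direct sum of finitely presented spread representations $\mathbb{k}_S$. *)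

theory Defs
  imports Complex_Main "HOL-Library.Function_Algebras"
begin

definition up :: "'a::order set \<Rightarrow> 'a set" where
  "up X = {p. \<exists>x\<in>X. x \<le> p}"

definition poset_convex :: "'a::order set \<Rightarrow> bool" where
  "poset_convex S \<longleftrightarrow> (\<forall>s\<in>S. \<forall>t\<in>S. \<forall>p. s \<le> p \<and> p \<le> t \<longrightarrow> p \<in> S)"

definition zigzag_connected :: "'a::order set \<Rightarrow> bool" where
  "zigzag_connected S \<longleftrightarrow>
     (\<forall>s\<in>S. \<forall>t\<in>S. (\<lambda>x y. x \<in> S \<and> y \<in> S \<and> (x \<le> y \<or> y \<le> x))\<^sup>*\<^sup>* s t)"

definition is_spread :: "'a::order set \<Rightarrow> bool" where
  "is_spread S \<longleftrightarrow> S \<noteq> {} \<and> poset_convex S \<and> zigzag_connected S"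

text \<open>A representation of a poset over a field 'k, with respect to a scalar
  multiplication s on an ambient type 'v: a family of subspaces V p together with
  structure maps f p q (meaningful for p \<le> q, on V p).\<close>

type_synonym ('a, 'v) rep = "('a \<Rightarrow> 'v set) \<times> ('a \<Rightarrow> 'a \<Rightarrow> 'v \<Rightarrow> 'v)"

definition lin_on :: "('k \<Rightarrow> 'v::ab_group_add \<Rightarrow> 'v) \<Rightarrow> ('k \<Rightarrow> 'w::ab_group_add \<Rightarrow> 'w)
    \<Rightarrow> 'v set \<Rightarrow> ('v \<Rightarrow> 'w) \<Rightarrow> bool" where
  "lin_on s1 s2 V g \<longleftrightarrow> (\<forall>x\<in>V. \<forall>y\<in>V. g (x + y) = g x + g y) \<and> (\<forall>c. \<forall>x\<in>V. g (s1 c x) = s2 c (g x))"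

definition is_rep :: "('k::field \<Rightarrow> 'v::ab_group_add \<Rightarrow> 'v) \<Rightarrow> ('a::order, 'v) rep \<Rightarrow> bool" where
  "is_rep s M \<longleftrightarrow> vector_space s \<and>
     (\<forall>p. 0 \<in> fst M p \<and> (\<forall>x\<in>fst M p. \<forall>y\<in>fst M p. x + y \<in> fst M p)
          \<and> (\<forall>c. \<forall>x\<in>fst M p. s c x \<in> fst M p)) \<and>
     (\<forall>p q. p \<le> q \<longrightarrow> (\<forall>x\<in>fst M p. snd M p q x \<in> fst M q) \<and> lin_on s s (fst M p) (snd M p q)) \<and>
     (\<forall>p. \<forall>x\<in>fst M p. snd M p p x = x) \<and>
     (\<forall>p q r. p \<le> q \<longrightarrow> q \<le> r \<longrightarrow> (\<forall>x\<in>fst M p. snd M q r (snd M p q x) = snd M p r x))"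

definition rep_iso :: "('k \<Rightarrow> 'v::ab_group_add \<Rightarrow> 'v) \<Rightarrow> ('a::order, 'v) rep
    \<Rightarrow> ('k \<Rightarrow> 'w::ab_group_add \<Rightarrow> 'w) \<Rightarrow> ('a, 'w) rep \<Rightarrow> bool" where
  "rep_iso s1 M s2 N \<longleftrightarrow> (\<exists>\<phi>. (\<forall>p. bij_betw (\<phi> p) (fst M p) (fst N p) \<and> lin_on s1 s2 (fst M p) (\<phi> p)) \<and>
     (\<forall>p q. p \<le> q \<longrightarrow> (\<forall>x\<in>fst M p. \<phi> q (snd M p q x) = snd N p q (\<phi> p x))))"

definition indicator_rep :: "'a::order set \<Rightarrow> ('a, 'k::field) rep" where
  "indicator_rep S = (\<lambda>p. if p \<in> S then UNIV else {0}, \<lambda>p q x. if p \<in> S \<and> q \<in> S then x else 0)"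

text \<open>Finite direct sum of indicator representations, realised inside nat \<Rightarrow> 'k.\<close>

definition fscale :: "'k::field \<Rightarrow> (nat \<Rightarrow> 'k) \<Rightarrow> (nat \<Rightarrow> 'k)" where
  "fscale c g = (\<lambda>i. c * g i)"

definition dsum_rep :: "'a::order set list \<Rightarrow> ('a, nat \<Rightarrow> 'k::field) rep" where
  "dsum_rep Ss = (\<lambda>p. {g. \<forall>i. g i \<noteq> 0 \<longrightarrow> i < length Ss \<and> p \<in> Ss ! i},
                  \<lambda>p q g i. if i < length Ss \<and> q \<in> Ss ! i then g i else 0)"

text \<open>Finitely presented: there are finitely many generators m_i in M(a_i) and finitely
  many relations r_j (elements of the kernel of the induced map from the free
  representation at b_j) generating the whole kernel; i.e. M is the cokernel of a
  morphism between finite direct sums of representations k_{up {x}}.\<close>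

definition gen_eval :: "('k \<Rightarrow> 'v::ab_group_add \<Rightarrow> 'v) \<Rightarrow> ('a::order, 'v) rep \<Rightarrow> nat \<Rightarrow> (nat \<Rightarrow> 'a)
    \<Rightarrow> (nat \<Rightarrow> 'v) \<Rightarrow> 'a \<Rightarrow> (nat \<Rightarrow> 'k) \<Rightarrow> 'v" where
  "gen_eval s M n a m p c = (\<Sum>i\<in>{i. i < n \<and> a i \<le> p}. s (c i) (snd M (a i) p (m i)))"

definition fin_pres :: "('k::field \<Rightarrow> 'v::ab_group_add \<Rightarrow> 'v) \<Rightarrow> ('a::order, 'v) rep \<Rightarrow> bool" where
  "fin_pres s M \<longleftrightarrow> (\<exists>(n::nat) (a::nat \<Rightarrow> 'a) (m::nat \<Rightarrow> 'v) (k::nat) (b::nat \<Rightarrow> 'a) (r::nat \<Rightarrow> nat \<Rightarrow> 'k).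
     (\<forall>i<n. m i \<in> fst M (a i)) \<and>
     (\<forall>p. fst M p = range (gen_eval s M n a m p)) \<and>
     (\<forall>p. {c. (\<forall>i. c i \<noteq> 0 \<longrightarrow> i < n \<and> a i \<le> p) \<and> gen_eval s M n a m p c = 0}
          = range (\<lambda>d. (\<lambda>i. \<Sum>j\<in>{j. j < k \<and> b j \<le> p}. d j * r j i))) \<and>
     (\<forall>j<k. (\<forall>i. r j i \<noteq> 0 \<longrightarrow> i < n \<and> a i \<le> b j) \<and> gen_eval s M n a m (b j) (r j) = 0))"

definition spread_decomposable :: "('k::field \<Rightarrow> 'v::ab_group_add \<Rightarrow> 'v) \<Rightarrow> ('a::order, 'v) rep \<Rightarrow> bool" where
  "spread_decomposable s M \<longleftrightarrow> (\<exists>Ss::'a set list.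
     (\<forall>S\<in>set Ss. is_spread S \<and> fin_pres ((*) :: 'k \<Rightarrow> 'k \<Rightarrow> 'k) (indicator_rep S)) \<and>
     rep_iso s M fscale (dsum_rep Ss))"

definition floor_psi :: "('q::{finite,semilattice_sup} \<Rightarrow> 'p::order) \<Rightarrow> 'p \<Rightarrow> 'q" where
  "floor_psi \<psi> p = Sup_fin {q. \<psi> q \<le> p}"

definition Lan :: "('q::{finite,semilattice_sup} \<Rightarrow> 'p::order) \<Rightarrow> ('q, 'v) rep \<Rightarrow> ('p, 'v) rep" where
  "Lan \<psi> M = (\<lambda>p. fst M (floor_psi \<psi> p), \<lambda>p p'. snd M (floor_psi \<psi> p) (floor_psi \<psi> p'))"

end

theory Submission
  imports Defs
begin

text \<open>Since \<psi> preserves binary joins and every p lies above some \<psi> q, the map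
  floor_psi \<psi> p = \<Squnion>{q. \<psi> q \<le> p} is right adjoint to \<psi>, i.e. q \<le> floor_psi \<psi> p iff
  \<psi> q \<le> p, and fullness gives floor_psi \<psi> (\<psi> q) = q. Precomposition with floor_psi \<psi>
  sends the indicator representation of S to that of its preimage, and by the
  adjunction the preimage of an upset up A is up (\<psi> ` A). Preimages of spreads are
  spreads: convexity survives monotone preimages, a zigzag in S is carried by \<psi>
  into the preimage, and each p is comparable to \<psi> (floor_psi \<psi> p). Finite
  presentations are transported by moving generators and relations along \<psi>, and
  Lan commutes with direct sums and isomorphisms.\<close>

lemma sup_hom_Sup_fin:
  fixes h :: "'a::semilattice_sup \<Rightarrow> 'b::semilattice_sup"
  assumes "\<And>x y. h (sup x y) = sup (h x) (h y)" and "finite N" and "N \<noteq> {}"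
  shows "h (Sup_fin N) = Sup_fin (h ` N)"
  using assms(2,3) by (induction rule: finite_ne_induct) (simp_all add: assms(1))

lemma Lan_indicator_rep:
  "Lan \<psi> (indicator_rep S) = indicator_rep (floor_psi \<psi> -` S)"
  unfolding Lan_def indicator_rep_def by auto

lemma Lan_dsum_rep:
  "Lan \<psi> (dsum_rep Ss) = dsum_rep (map (\<lambda>S. floor_psi \<psi> -` S) Ss)"
  unfolding Lan_def dsum_rep_def by (auto intro!: ext)

lemma rep_iso_refl: "rep_iso s M s M"
  unfolding rep_iso_def lin_on_def by (intro exI[of _ "\<lambda>p. id"]) simp

lemma rep_iso_Lan:
  assumes "mono (floor_psi \<psi>)" and "rep_iso s1 M s2 N"
  shows "rep_iso s1 (Lan \<psi> M) s2 (Lan \<psi> N)"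
proof -
  obtain \<phi> where "\<forall>p. bij_betw (\<phi> p) (fst M p) (fst N p) \<and> lin_on s1 s2 (fst M p) (\<phi> p)"
    and "\<forall>p q. p \<le> q \<longrightarrow> (\<forall>x\<in>fst M p. \<phi> q (snd M p q x) = snd N p q (\<phi> p x))"
    using assms(2) unfolding rep_iso_def by blast
  with assms(1) show ?thesis
    unfolding rep_iso_def Lan_def
    by (intro exI[of _ "\<lambda>p. \<phi> (floor_psi \<psi> p)"]) (simp add: monoD)
qed

lemma poset_convex_vimage_mono:
  assumes "poset_convex S" and "mono f"
  shows "poset_convex (f -` S)"
  using assms unfolding poset_convex_def vimage_def
  by (metis (no_types, lifting) mem_Collect_eq monoD)

locale full_covering_sup_hom =
  fixes \<psi> :: "'q::{finite,semilattice_sup} \<Rightarrow> 'p::semilattice_sup"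
  assumes sup_hom: "\<psi> (sup a b) = sup (\<psi> a) (\<psi> b)"
    and full: "\<psi> a \<le> \<psi> b \<Longrightarrow> a \<le> b"
    and cover: "up (range \<psi>) = UNIV"
begin

lemma mono_psi: "mono \<psi>"
proof
  fix a b :: 'q
  assume "a \<le> b"
  then have "\<psi> b = sup (\<psi> a) (\<psi> b)"
    by (metis sup_hom sup_absorb2)
  then show "\<psi> a \<le> \<psi> b"
    by (metis sup_ge1)
qed

lemma psi_mono: "a \<le> b \<Longrightarrow> \<psi> a \<le> \<psi> b"
  using mono_psi by (rule monoD)

lemma psi_floor_psi_le: "\<psi> (floor_psi \<psi> p) \<le> p"
proof -
  obtain q where "\<psi> q \<le> p"
    using cover unfolding up_def by blast
  then have "{q. \<psi> q \<le> p} \<noteq> {}"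
    by blast
  then have "\<psi> (floor_psi \<psi> p) = Sup_fin (\<psi> ` {q. \<psi> q \<le> p})"
    unfolding floor_psi_def by (rule sup_hom_Sup_fin[OF sup_hom finite])
  also have "\<dots> \<le> p"
    using \<open>{q. \<psi> q \<le> p} \<noteq> {}\<close> by (intro Sup_fin.boundedI) auto
  finally show ?thesis .
qed

lemma le_floor_psi_iff: "q \<le> floor_psi \<psi> p \<longleftrightarrow> \<psi> q \<le> p"
proof
  assume "q \<le> floor_psi \<psi> p"
  then show "\<psi> q \<le> p"
    using psi_mono psi_floor_psi_le order_trans by blast
next
  assume "\<psi> q \<le> p"
  then show "q \<le> floor_psi \<psi> p"
    unfolding floor_psi_def by (intro Sup_fin.coboundedI) auto
qed

lemma floor_psi_psi [simp]: "floor_psi \<psi> (\<psi> q) = q"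
  by (metis antisym full le_floor_psi_iff order_refl)

lemma mono_floor_psi: "mono (floor_psi \<psi>)"
  by (metis le_floor_psi_iff monoI order_trans psi_floor_psi_le)

lemma vimage_floor_psi_up: "floor_psi \<psi> -` up A = up (\<psi> ` A)"
  unfolding up_def by (auto simp: le_floor_psi_iff)

lemma gen_eval_Lan:
  "gen_eval s (Lan \<psi> M) n (\<psi> \<circ> a) m p = gen_eval s M n a m (floor_psi \<psi> p)"
  unfolding gen_eval_def Lan_def by (simp add: le_floor_psi_iff)

text \<open>Generators of M at a i and relations at b j become generators of Lan M at
  \<psi> (a i) and relations at \<psi> (b j).\<close>

lemma fin_pres_Lan:
  fixes s :: "'k::field \<Rightarrow> 'v::ab_group_add \<Rightarrow> 'v" and M :: "('q, 'v) rep"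
  assumes "fin_pres s M"
  shows "fin_pres s (Lan \<psi> M)"
proof -
  obtain n k :: nat and a b :: "nat \<Rightarrow> 'q" and m :: "nat \<Rightarrow> 'v"
    and r :: "nat \<Rightarrow> nat \<Rightarrow> 'k" where
    gens: "\<forall>i<n. m i \<in> fst M (a i)" and
    span: "\<forall>p. fst M p = range (gen_eval s M n a m p)" and
    rels: "\<forall>p. {c. (\<forall>i. c i \<noteq> 0 \<longrightarrow> i < n \<and> a i \<le> p) \<and> gen_eval s M n a m p c = 0}
          = range (\<lambda>d. (\<lambda>i. \<Sum>j\<in>{j. j < k \<and> b j \<le> p}. d j * r j i))" and
    rels_ker: "\<forall>j<k. (\<forall>i. r j i \<noteq> 0 \<longrightarrow> i < n \<and> a i \<le> b j) \<and> gen_eval s M n a m (b j) (r j) = 0"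
    using assms unfolding fin_pres_def by (elim exE conjE) (rule that)
  have "\<forall>i<n. m i \<in> fst (Lan \<psi> M) ((\<psi> \<circ> a) i)"
    using gens by (simp add: Lan_def)
  moreover have "\<forall>p. fst (Lan \<psi> M) p = range (gen_eval s (Lan \<psi> M) n (\<psi> \<circ> a) m p)"
    unfolding gen_eval_Lan using span by (simp add: Lan_def)
  moreover have "\<forall>p. {c. (\<forall>i. c i \<noteq> 0 \<longrightarrow> i < n \<and> (\<psi> \<circ> a) i \<le> p)
                         \<and> gen_eval s (Lan \<psi> M) n (\<psi> \<circ> a) m p c = 0}
          = range (\<lambda>d. (\<lambda>i. \<Sum>j\<in>{j. j < k \<and> (\<psi> \<circ> b) j \<le> p}. d j * r j i))"
    using rels by (simp only: o_apply gen_eval_Lan le_floor_psi_iff[symmetric]) blast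
  moreover have "\<forall>j<k. (\<forall>i. r j i \<noteq> 0 \<longrightarrow> i < n \<and> (\<psi> \<circ> a) i \<le> (\<psi> \<circ> b) j)
        \<and> gen_eval s (Lan \<psi> M) n (\<psi> \<circ> a) m ((\<psi> \<circ> b) j) (r j) = 0"
    using rels_ker psi_mono by (simp add: gen_eval_Lan)
  ultimately show ?thesis
    unfolding fin_pres_def by (intro exI[of _ n] exI[of _ "\<psi> \<circ> a"] exI[of _ m] exI[of _ k]
        exI[of _ "\<psi> \<circ> b"] exI[of _ r] conjI)
qed

lemma zigzag_connected_vimage_floor_psi:
  assumes "zigzag_connected S"
  shows "zigzag_connected (floor_psi \<psi> -` S)"
proof -
  let ?zz = "\<lambda>T x y. x \<in> T \<and> y \<in> T \<and> (x \<le> y \<or> y \<le> x)"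
  let ?S' = "floor_psi \<psi> -` S"
  have psi_path: "(?zz ?S')\<^sup>*\<^sup>* (\<psi> q) (\<psi> q')" if "(?zz S)\<^sup>*\<^sup>* q q'" for q q'
    using that
  proof (induction rule: rtranclp_induct)
    case base
    then show ?case by simp
  next
    case (step q' q'')
    from step.hyps(2) have "?zz ?S' (\<psi> q') (\<psi> q'')"
      using psi_mono by auto
    with step.IH show ?case
      by (rule rtranclp.rtrancl_into_rtrancl)
  qed
  show ?thesis
    unfolding zigzag_connected_def
  proof (intro ballI)
    fix p p' assume p: "p \<in> ?S'" and p': "p' \<in> ?S'"
    have start: "?zz ?S' p (\<psi> (floor_psi \<psi> p))"
      using p by (simp add: psi_floor_psi_le)
    have finish: "?zz ?S' (\<psi> (floor_psi \<psi> p')) p'"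
      using p' by (simp add: psi_floor_psi_le)
    have "(?zz S)\<^sup>*\<^sup>* (floor_psi \<psi> p) (floor_psi \<psi> p')"
      using assms p p' unfolding zigzag_connected_def by blast
    then have "(?zz ?S')\<^sup>*\<^sup>* (\<psi> (floor_psi \<psi> p)) (\<psi> (floor_psi \<psi> p'))"
      by (rule psi_path)
    then show "(?zz ?S')\<^sup>*\<^sup>* p p'"
      using converse_rtranclp_into_rtranclp[of "?zz ?S'", OF start]
        rtranclp.rtrancl_into_rtrancl[of "?zz ?S'", OF _ finish]
      by blast
  qed
qed

lemma is_spread_vimage_floor_psi:
  assumes "is_spread S"
  shows "is_spread (floor_psi \<psi> -` S)"
proof -
  obtain q where "q \<in> S"
    using assms unfolding is_spread_def by blast
  then have "\<psi> q \<in> floor_psi \<psi> -` S"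
    by simp
  with assms show ?thesis
    unfolding is_spread_def
    using poset_convex_vimage_mono[OF _ mono_floor_psi] zigzag_connected_vimage_floor_psi
    by blast
qed

lemma spread_decomposable_Lan:
  fixes s :: "'k::field \<Rightarrow> 'v::ab_group_add \<Rightarrow> 'v" and M :: "('q, 'v) rep"
  assumes "spread_decomposable s M"
  shows "spread_decomposable s (Lan \<psi> M)"
proof -
  obtain Ss where
    spreads: "\<forall>S\<in>set Ss. is_spread S \<and> fin_pres ((*) :: 'k \<Rightarrow> 'k \<Rightarrow> 'k) (indicator_rep S)"
    and iso: "rep_iso s M fscale (dsum_rep Ss)"
    using assms unfolding spread_decomposable_def by blast
  have "is_spread S' \<and> fin_pres ((*) :: 'k \<Rightarrow> 'k \<Rightarrow> 'k) (indicator_rep S')"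
    if S': "S' \<in> set (map (\<lambda>S. floor_psi \<psi> -` S) Ss)" for S'
  proof -
    obtain S where "S \<in> set Ss" and "S' = floor_psi \<psi> -` S"
      using S' by auto
    then show ?thesis
      using spreads is_spread_vimage_floor_psi fin_pres_Lan
      by (metis Lan_indicator_rep)
  qed
  moreover have "rep_iso s (Lan \<psi> M) fscale (dsum_rep (map (\<lambda>S. floor_psi \<psi> -` S) Ss))"
    using rep_iso_Lan[OF mono_floor_psi iso] by (simp only: Lan_dsum_rep)
  ultimately show ?thesis
    unfolding spread_decomposable_def by blast
qed

end

theorem mainTheorem9:
  fixes \<psi> :: "'q::{finite,semilattice_sup} \<Rightarrow> 'p::semilattice_sup"
  assumes hom: "\<forall>a b. \<psi> (sup a b) = sup (\<psi> a) (\<psi> b)"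
    and full: "\<forall>a b. \<psi> a \<le> \<psi> b \<longrightarrow> a \<le> b"
    and cover: "up (range \<psi>) = UNIV"
  shows "(\<forall>A B :: 'q set. B \<subseteq> up A \<longrightarrow>
            rep_iso ((*) :: 'k::field \<Rightarrow> 'k \<Rightarrow> 'k) (Lan \<psi> (indicator_rep (up A - up B)))
                    ((*) :: 'k \<Rightarrow> 'k \<Rightarrow> 'k) (indicator_rep (up (\<psi> ` A) - up (\<psi> ` B))))
       \<and> (\<forall>(s :: 'k \<Rightarrow> 'v::ab_group_add \<Rightarrow> 'v) (M :: ('q, 'v) rep).
            is_rep s M \<and> spread_decomposable s M \<longrightarrow> spread_decomposable s (Lan \<psi> M))"
proof -
  interpret full_covering_sup_hom \<psi>
    using assms by unfold_locales blast+
  have "Lan \<psi> (indicator_rep (up A - up B)) = indicator_rep (up (\<psi> ` A) - up (\<psi> ` B))"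
    for A B :: "'q set"
    by (simp add: Lan_indicator_rep vimage_Diff vimage_floor_psi_up)
  then show ?thesis
    by (metis rep_iso_refl spread_decomposable_Lan)
qed

end
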